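(* Let $q$ be a query with sensitivity $\Delta q>0$, let $0\le a<c$, and let the random scale $b$ be such that $1/b$ is uniformly distributed on $[a,c]$. Then the R$^2$DP Laplace mechanism $\mathcal M_q(d,b)=q(d)+\mathrm{Lap}(b)$ is $$\ln\left[\frac{\alpha^2-\beta^2}{2\big((1+\beta)e^{-\beta}-(1+\alpha)e^{-\alpha}\big)}\right]\text{-differentially private},$$ where $\alpha=a\,\Delta q$ and $\beta=c\,\Delta q$.
   Context: $\mathrm{Lap}(b)$ is the zero-mean Laplace distribution with density $\frac{1}{2b}e^{-|x|/b}$; the R$^2$DP Laplace mechanism draws the random scale $b$ (independently of the data) and then adds $\mathrm{Lap}(b)$ noise to $q(d)$. $\Delta q=\max|q(d)-q(d')|$ over datasets $d,d'$ differing in one individual's data. A mechanism is $\epsilon$-differentially private if $\mathbb P(\mathcal M(d)\in S)\le e^\epsilon\mathbb P(\mathcal M(d')\in S)$ for all such $d,d'$ and measurable $S$. *)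

theory Defs
  imports "HOL-Probability.Probability"
begin

definition lap_density :: "real \<Rightarrow> real \<Rightarrow> real" where
  "lap_density b x = exp (- \<bar>x\<bar> / b) / (2 * b)"

definition laplace_shifted :: "real \<Rightarrow> real \<Rightarrow> real measure" where
  "laplace_shifted v b = density lborel (\<lambda>y. ennreal (lap_density b (y - v)))"

definition R2DP_laplace :: "real measure \<Rightarrow> ('d \<Rightarrow> real) \<Rightarrow> 'd \<Rightarrow> real measure" where
  "R2DP_laplace B q d = B \<bind> (\<lambda>b. laplace_shifted (q d) b)"

definition sensitivity :: "('d \<Rightarrow> 'd \<Rightarrow> bool) \<Rightarrow> ('d \<Rightarrow> real) \<Rightarrow> real" where
  "sensitivity adj q = (SUP p\<in>{(d, d'). adj d d'}. \<bar>q (fst p) - q (snd p)\<bar>)"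

definition differentially_private ::
  "('d \<Rightarrow> 'd \<Rightarrow> bool) \<Rightarrow> ('d \<Rightarrow> real measure) \<Rightarrow> real \<Rightarrow> bool" where
  "differentially_private adj M \<epsilon> \<longleftrightarrow>
     (\<forall>d d'. adj d d' \<longrightarrow>
        (\<forall>S \<in> sets borel. measure (M d) S \<le> exp \<epsilon> * measure (M d') S))"

end

theory Submission
  imports Defs
begin

text \<open>With \<open>u = 1 / b\<close> uniform on \<open>[a, c]\<close>, the mechanism has output density \<open>f (x - q d)\<close>
  where \<open>f y\<close> is proportional to \<open>H \<bar>y\<bar>\<close>, \<open>H t = \<integral> u e^(-u t) du\<close> over \<open>[a, c]\<close>:
  a Laplace transform of a nonnegative weight. Symmetrising the double integral for
  \<open>H t * H D\<close> gives the Chebyshev-type inequality \<open>H t * H D \<le> H 0 * H (t + D)\<close>, and \<open>H\<close>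
  is decreasing, so \<open>H t \<le> H 0 / H D * H s\<close> whenever \<open>s \<le> t + D\<close>. For \<open>D = \<Delta>q\<close> this
  bounds the ratio of the output densities at neighbouring datasets by \<open>H 0 / H \<Delta>q\<close>,
  which is \<open>exp \<epsilon>\<close> for the stated \<open>\<epsilon>\<close>.\<close>

lemma measurable_lap_density[measurable]:
  assumes [measurable]: "f \<in> borel_measurable M" "g \<in> borel_measurable M"
  shows "(\<lambda>x. lap_density (f x) (g x)) \<in> borel_measurable M"
  unfolding lap_density_def by measurable

lemma nn_integral_lap_density_le_1:
  "(\<integral>\<^sup>+y. ennreal (lap_density b (y - v)) \<partial>lborel) \<le> 1"
proof (cases "b > 0")
  case True
  let ?e = "exponential_density (1 / b)"
  have e: "(\<integral>\<^sup>+y. ennreal (?e y) \<partial>lborel) = 1"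
    using prob_space.emeasure_space_1[OF prob_space_exponential_density, of "1 / b"] True
    by (simp add: emeasure_density)
  have e_neg: "(\<integral>\<^sup>+y. ennreal (?e (- y)) \<partial>lborel) = 1"
    using nn_integral_real_affine[where c="-1" and t=0 and f="\<lambda>y. ennreal (?e y)"] e by simp
  have "(\<integral>\<^sup>+y. ennreal (lap_density b (y - v)) \<partial>lborel) = (\<integral>\<^sup>+y. ennreal (lap_density b y) \<partial>lborel)"
    by (subst nn_integral_real_affine[where c=1 and t=v]) auto
  also have "\<dots> \<le> (\<integral>\<^sup>+y. (ennreal (?e y) + ennreal (?e (- y))) / 2 \<partial>lborel)"
  proof (intro nn_integral_mono)
    fix y
    have "lap_density b y \<le> (?e y + ?e (- y)) / 2"
      using True by (auto simp: lap_density_def exponential_density_def field_simps)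
    then have "ennreal (lap_density b y) \<le> ennreal ((?e y + ?e (- y)) / 2)"
      by (rule ennreal_leI)
    also have "\<dots> = (ennreal (?e y) + ennreal (?e (- y))) / 2"
      using divide_ennreal[of "?e y + ?e (- y)" 2] True by (simp add: ennreal_plus)
    finally show "ennreal (lap_density b y) \<le> (ennreal (?e y) + ennreal (?e (- y))) / 2" .
  qed
  also have "\<dots> = ((\<integral>\<^sup>+y. ennreal (?e y) \<partial>lborel) + (\<integral>\<^sup>+y. ennreal (?e (- y)) \<partial>lborel)) / 2"
    by (simp add: nn_integral_divide nn_integral_add)
  finally show ?thesis
    by (simp add: e e_neg)
next
  case False
  then have "lap_density b y \<le> 0" for y
    by (cases "b = 0") (auto simp: lap_density_def divide_nonneg_neg)
  then show ?thesis
    by (simp add: ennreal_neg)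
qed

lemma subprob_space_laplace_shifted: "subprob_space (laplace_shifted v b)"
proof (rule subprob_spaceI)
  show "emeasure (laplace_shifted v b) (space (laplace_shifted v b)) \<le> 1"
    using nn_integral_lap_density_le_1[of b v]
    by (simp add: laplace_shifted_def emeasure_density)
qed (simp add: laplace_shifted_def)

lemma measurable_laplace_shifted: "laplace_shifted v \<in> borel \<rightarrow>\<^sub>M subprob_algebra borel"
proof (rule measurable_subprob_algebra)
  fix A :: "real set" assume [measurable]: "A \<in> sets borel"
  have "(\<lambda>b. emeasure (laplace_shifted v b) A) =
      (\<lambda>b. \<integral>\<^sup>+y. ennreal (lap_density b (y - v)) * indicator A y \<partial>lborel)"
    unfolding laplace_shifted_def by (intro ext emeasure_density) auto
  also have "\<dots> \<in> borel_measurable borel"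
    by measurable
  finally show "(\<lambda>b. emeasure (laplace_shifted v b) A) \<in> borel_measurable borel" .
qed (rule subprob_space_laplace_shifted, simp add: laplace_shifted_def)

lemma bind_laplace_shifted_eq_density:
  assumes B: "subprob_space B" "sets B = sets borel"
  shows "B \<bind> laplace_shifted v = density lborel (\<lambda>x. \<integral>\<^sup>+b. ennreal (lap_density b (x - v)) \<partial>B)"
proof -
  note B(2)[measurable_cong]
  interpret B: subprob_space B by (rule B(1))
  interpret pair_sigma_finite B lborel ..
  have kernel: "laplace_shifted v \<in> B \<rightarrow>\<^sub>M subprob_algebra borel"
    using measurable_laplace_shifted by (simp add: measurable_cong_sets[OF B(2) refl])
  show ?thesis
  proof (rule measure_eqI)
    fix S assume "S \<in> sets (B \<bind> laplace_shifted v)"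
    then have [measurable]: "S \<in> sets borel"
      using kernel by (simp add: sets_bind_measurable B.subprob_not_empty)
    have "emeasure (B \<bind> laplace_shifted v) S = (\<integral>\<^sup>+b. emeasure (laplace_shifted v b) S \<partial>B)"
      by (rule emeasure_bind[OF B.subprob_not_empty kernel]) simp
    also have "\<dots> = (\<integral>\<^sup>+b. (\<integral>\<^sup>+x. ennreal (lap_density b (x - v)) * indicator S x \<partial>lborel) \<partial>B)"
      unfolding laplace_shifted_def by (intro nn_integral_cong emeasure_density) auto
    also have "\<dots> = (\<integral>\<^sup>+x. (\<integral>\<^sup>+b. ennreal (lap_density b (x - v)) * indicator S x \<partial>B) \<partial>lborel)"
      by (rule Fubini'[symmetric]) measurable
    also have "\<dots> = (\<integral>\<^sup>+x. (\<integral>\<^sup>+b. ennreal (lap_density b (x - v)) \<partial>B) * indicator S x \<partial>lborel)"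
      by (intro nn_integral_cong nn_integral_multc) measurable
    also have "\<dots> = emeasure (density lborel (\<lambda>x. \<integral>\<^sup>+b. ennreal (lap_density b (x - v)) \<partial>B)) S"
      by (rule emeasure_density[symmetric]) measurable
    finally show "emeasure (B \<bind> laplace_shifted v) S =
        emeasure (density lborel (\<lambda>x. \<integral>\<^sup>+b. ennreal (lap_density b (x - v)) \<partial>B)) S" .
  qed (simp add: sets_bind_measurable[OF kernel B.subprob_not_empty])
qed

lemma subprob_space_R2DP_laplace:
  assumes "subprob_space B" "sets B = sets borel"
  shows "subprob_space (R2DP_laplace B q d)"
  unfolding R2DP_laplace_def
  using assms measurable_laplace_shifted
  by (intro subprob_space_bind) (simp_all add: measurable_cong_sets[OF assms(2) refl])

lemma abs_diff_le_sensitivity: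
  assumes "bdd_above ((\<lambda>p. \<bar>q (fst p) - q (snd p)\<bar>) ` {(d, d'). adj d d'})" "adj d d'"
  shows "\<bar>q d - q d'\<bar> \<le> sensitivity adj q"
  using cSUP_upper[OF _ assms(1), of "(d, d')"] assms(2) by (simp add: sensitivity_def)

lemma differentially_private_shifted_density:
  fixes f :: "real \<Rightarrow> ennreal"
  assumes M: "\<And>d. M d = density lborel (\<lambda>x. f (x - q d))"
    and M_finite: "\<And>d. finite_measure (M d)"
    and f[measurable]: "f \<in> borel_measurable borel"
    and q: "\<And>d d'. adj d d' \<Longrightarrow> \<bar>q d - q d'\<bar> \<le> \<Delta>"
    and f_ratio: "\<And>y y'. \<bar>y - y'\<bar> \<le> \<Delta> \<Longrightarrow> f y \<le> ennreal (exp \<epsilon>) * f y'"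
  shows "differentially_private adj M \<epsilon>"
  unfolding differentially_private_def
proof (intro allI impI ballI)
  fix d d' S assume "adj d d'" and [measurable]: "S \<in> sets (borel :: real measure)"
  have "emeasure (M d) S = (\<integral>\<^sup>+x. f (x - q d) * indicator S x \<partial>lborel)"
    unfolding M by (rule emeasure_density) measurable
  also have "\<dots> \<le> (\<integral>\<^sup>+x. ennreal (exp \<epsilon>) * (f (x - q d') * indicator S x) \<partial>lborel)"
    using f_ratio q[OF \<open>adj d d'\<close>]
    by (intro nn_integral_mono) (auto simp: mult.assoc[symmetric] intro: mult_right_mono)
  also have "\<dots> = ennreal (exp \<epsilon>) * emeasure (M d') S"
    unfolding M by (simp add: nn_integral_cmult emeasure_density)
  finally have "ennreal (measure (M d) S) \<le> ennreal (exp \<epsilon> * measure (M d') S)"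
    by (simp add: finite_measure.emeasure_eq_measure[OF M_finite] ennreal_mult)
  then show "measure (M d) S \<le> exp \<epsilon> * measure (M d') S"
    by (simp add: ennreal_le_iff)
qed

definition laplace_transform :: "(real \<Rightarrow> real) \<Rightarrow> real \<Rightarrow> ennreal" where
  "laplace_transform w t = (\<integral>\<^sup>+u. ennreal (w u * exp (- (u * t))) \<partial>lborel)"

lemma laplace_transform_antimono:
  assumes "\<And>u. 0 \<le> w u" "\<And>u. u < 0 \<Longrightarrow> w u = 0" "t \<le> s"
  shows "laplace_transform w s \<le> laplace_transform w t"
  unfolding laplace_transform_def
proof (intro nn_integral_mono ennreal_leI)
  fix u :: real
  show "w u * exp (- (u * s)) \<le> w u * exp (- (u * t))"
    using assms by (cases "u < 0") (auto intro!: mult_left_mono)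
qed

lemma laplace_transform_mult_eq_pair_integral:
  assumes [measurable]: "w \<in> borel_measurable borel" and w_nonneg: "\<And>u. 0 \<le> w u"
  shows "laplace_transform w t * laplace_transform w s =
    (\<integral>\<^sup>+p. ennreal (w (fst p) * w (snd p) * exp (- (fst p * t)) * exp (- (snd p * s))) \<partial>(lborel \<Otimes>\<^sub>M lborel))"
proof -
  have "laplace_transform w t * laplace_transform w s =
      (\<integral>\<^sup>+u. (\<integral>\<^sup>+v. ennreal (w u * exp (- (u * t))) * ennreal (w v * exp (- (v * s))) \<partial>lborel) \<partial>lborel)"
    unfolding laplace_transform_def
    by (simp add: nn_integral_cmult nn_integral_multc del: ennreal_mult')
  also have "\<dots> = (\<integral>\<^sup>+u. (\<integral>\<^sup>+v. ennreal (w u * w v * exp (- (u * t)) * exp (- (v * s))) \<partial>lborel) \<partial>lborel)"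
    using w_nonneg by (intro nn_integral_cong) (simp add: ennreal_mult'[symmetric] mult_ac)
  also have "\<dots> = (\<integral>\<^sup>+p. ennreal (w (fst p) * w (snd p) * exp (- (fst p * t)) * exp (- (snd p * s))) \<partial>(lborel \<Otimes>\<^sub>M lborel))"
    by (subst lborel.nn_integral_fst[symmetric]) simp_all
  finally show ?thesis .
qed

lemma exp_mult_add_le:
  fixes u v t s :: real
  assumes "0 \<le> t" "0 \<le> s"
  shows "exp (- (u * t)) * exp (- (v * s)) + exp (- (v * t)) * exp (- (u * s))
    \<le> exp (- (u * (t + s))) + exp (- (v * (t + s)))"
proof -
  have "0 \<le> (exp (- (u * t)) - exp (- (v * t))) * (exp (- (u * s)) - exp (- (v * s)))"
  proof (cases "u \<le> v")
    case True
    then have "exp (- (v * t)) \<le> exp (- (u * t))" "exp (- (v * s)) \<le> exp (- (u * s))"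
      using assms by (auto intro: mult_right_mono)
    then show ?thesis by simp
  next
    case False
    then have "exp (- (u * t)) \<le> exp (- (v * t))" "exp (- (u * s)) \<le> exp (- (v * s))"
      using assms by (auto intro: mult_right_mono)
    then show ?thesis by (simp add: mult_nonpos_nonpos)
  qed
  then show ?thesis
    by (simp add: algebra_simps flip: exp_add)
qed

lemma laplace_transform_mult_le:
  assumes [measurable]: "w \<in> borel_measurable borel" and w_nonneg: "\<And>u. 0 \<le> w u"
    and "0 \<le> t" "0 \<le> s"
  shows "laplace_transform w t * laplace_transform w s \<le> laplace_transform w 0 * laplace_transform w (t + s)"
proof -
  define K where "K t s p = w (fst p) * w (snd p) * exp (- (fst p * t)) * exp (- (snd p * s))" for t s p
  have prod: "laplace_transform w t * laplace_transform w s = (\<integral>\<^sup>+p. ennreal (K t s p) \<partial>(lborel \<Otimes>\<^sub>M lborel))"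
    for t s
    unfolding K_def by (rule laplace_transform_mult_eq_pair_integral) (use w_nonneg in auto)
  have K_nonneg: "0 \<le> K t s p" for t s p
    unfolding K_def using w_nonneg by simp
  have K_measurable[measurable]: "(\<lambda>p. K t s p) \<in> borel_measurable (lborel \<Otimes>\<^sub>M lborel)" for t s
    unfolding K_def by measurable
  have sum: "laplace_transform w t * laplace_transform w s + laplace_transform w t' * laplace_transform w s' =
      (\<integral>\<^sup>+p. ennreal (K t s p + K t' s' p) \<partial>(lborel \<Otimes>\<^sub>M lborel))" for t s t' s'
    unfolding prod using K_nonneg by (subst nn_integral_add[symmetric]) auto
  have "2 * (laplace_transform w t * laplace_transform w s) =
      (\<integral>\<^sup>+p. ennreal (K t s p + K s t p) \<partial>(lborel \<Otimes>\<^sub>M lborel))"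
    unfolding sum[symmetric] by (simp add: mult_2 mult.commute)
  also have "\<dots> \<le> (\<integral>\<^sup>+p. ennreal (K 0 (t + s) p + K (t + s) 0 p) \<partial>(lborel \<Otimes>\<^sub>M lborel))"
  proof (intro nn_integral_mono ennreal_leI)
    fix p :: "real \<times> real"
    have "w (fst p) * w (snd p) * (exp (- (fst p * t)) * exp (- (snd p * s)) + exp (- (snd p * t)) * exp (- (fst p * s)))
        \<le> w (fst p) * w (snd p) * (exp (- (fst p * (t + s))) + exp (- (snd p * (t + s))))"
      using exp_mult_add_le[OF \<open>0 \<le> t\<close> \<open>0 \<le> s\<close>] w_nonneg by (intro mult_left_mono) auto
    then show "K t s p + K s t p \<le> K 0 (t + s) p + K (t + s) 0 p"
      by (simp add: K_def algebra_simps)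
  qed
  also have "\<dots> = 2 * (laplace_transform w 0 * laplace_transform w (t + s))"
    unfolding sum[symmetric] by (simp add: mult_2 mult.commute)
  finally show ?thesis
    by (simp add: ennreal_mult_le_mult_iff)
qed

lemma laplace_transform_le_ratio_mult:
  assumes [measurable]: "w \<in> borel_measurable borel"
    and w_nonneg: "\<And>u. 0 \<le> w u" and w_neg: "\<And>u. u < 0 \<Longrightarrow> w u = 0"
    and "0 \<le> t" "0 \<le> D" "s \<le> t + D"
    and LD: "laplace_transform w D \<noteq> 0" "laplace_transform w D \<noteq> \<top>"
  shows "laplace_transform w t \<le> laplace_transform w 0 / laplace_transform w D * laplace_transform w s"
proof -
  have "laplace_transform w t * laplace_transform w D \<le> laplace_transform w 0 * laplace_transform w (t + D)"
    using assms by (intro laplace_transform_mult_le) auto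
  also have "\<dots> \<le> laplace_transform w 0 * laplace_transform w s"
    using assms by (intro mult_left_mono laplace_transform_antimono) auto
  finally have "laplace_transform w t * laplace_transform w D / laplace_transform w D
      \<le> laplace_transform w 0 * laplace_transform w s / laplace_transform w D"
    by (rule divide_right_mono_ennreal)
  moreover have "laplace_transform w 0 * laplace_transform w s / laplace_transform w D =
      laplace_transform w 0 / laplace_transform w D * laplace_transform w s"
    by (simp add: ennreal_divide_times ennreal_times_divide)
  ultimately show ?thesis
    by (simp only: mult_divide_eq_ennreal[OF LD])
qed

lemma laplace_transform_Icc_zero:
  assumes "0 \<le> a" "a \<le> c"
  shows "laplace_transform (\<lambda>u. indicator {a..c} u * u) 0 = ennreal ((c\<^sup>2 - a\<^sup>2) / 2)"
proof -
  have "laplace_transform (\<lambda>u. indicator {a..c} u * u) 0 = (\<integral>\<^sup>+u. ennreal u * indicator {a..c} u \<partial>lborel)"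
    unfolding laplace_transform_def by (intro nn_integral_cong) (auto split: split_indicator)
  also have "\<dots> = ennreal (c\<^sup>2 / 2 - a\<^sup>2 / 2)"
    using assms by (intro nn_integral_FTC_Icc[where F="\<lambda>u. u\<^sup>2 / 2"]) (auto intro!: derivative_eq_intros)
  finally show ?thesis
    by (simp add: diff_divide_distrib)
qed

lemma laplace_transform_Icc:
  assumes "0 \<le> a" "a \<le> c" "0 < t"
  shows "laplace_transform (\<lambda>u. indicator {a..c} u * u) t =
    ennreal (((1 + a * t) * exp (- (a * t)) - (1 + c * t) * exp (- (c * t))) / t\<^sup>2)"
proof -
  let ?F = "\<lambda>u. - ((1 + u * t) * exp (- (u * t))) / t\<^sup>2"
  have "laplace_transform (\<lambda>u. indicator {a..c} u * u) t =
      (\<integral>\<^sup>+u. ennreal (u * exp (- (u * t))) * indicator {a..c} u \<partial>lborel)"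
    unfolding laplace_transform_def by (intro nn_integral_cong) (auto split: split_indicator)
  also have "\<dots> = ennreal (?F c - ?F a)"
  proof (rule nn_integral_FTC_Icc)
    fix x assume "x \<in> {a..c}"
    show "(?F has_real_derivative x * exp (- (x * t))) (at x)"
      using assms by (auto intro!: derivative_eq_intros simp: field_simps power2_eq_square)
    show "0 \<le> x * exp (- (x * t))"
      using assms \<open>x \<in> {a..c}\<close> by auto
  qed (auto simp: assms)
  finally show ?thesis
    by (simp add: diff_divide_distrib)
qed

lemma one_plus_mult_exp_neg_strict_decreasing:
  fixes x y :: real
  assumes "0 \<le> x" "x < y"
  shows "(1 + y) * exp (- y) < (1 + x) * exp (- x)"
proof (rule DERIV_neg_imp_decreasing_open[OF \<open>x < y\<close>])
  fix z :: real assume "x < z" "z < y"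
  then show "\<exists>y. ((\<lambda>x. (1 + x) * exp (- x)) has_real_derivative y) (at z) \<and> y < 0"
    using assms by (intro exI[of _ "- z * exp (- z)"]) (auto intro!: derivative_eq_intros simp: algebra_simps)
qed (auto intro!: continuous_intros)

definition inverse_uniform_density_ratio :: "real \<Rightarrow> real \<Rightarrow> real" where
  "inverse_uniform_density_ratio \<alpha> \<beta> =
    (\<alpha>\<^sup>2 - \<beta>\<^sup>2) / (2 * ((1 + \<beta>) * exp (- \<beta>) - (1 + \<alpha>) * exp (- \<alpha>)))"

lemma inverse_uniform_density_ratio_pos:
  assumes "0 \<le> \<alpha>" "\<alpha> < \<beta>"
  shows "0 < inverse_uniform_density_ratio \<alpha> \<beta>"
  unfolding inverse_uniform_density_ratio_def
  using one_plus_mult_exp_neg_strict_decreasing[OF assms] power_strict_mono[OF assms(2) assms(1), of 2]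
  by (intro divide_neg_neg) auto

lemma nn_integral_lap_density_inverse_uniform:
  assumes "0 \<le> a" "a < c" and B_sets: "sets B = sets borel"
    and B_inv_unif: "distr B borel (\<lambda>b. 1 / b) = uniform_measure lborel {a..c}"
  shows "(\<integral>\<^sup>+b. ennreal (lap_density b y) \<partial>B) =
    laplace_transform (\<lambda>u. indicator {a..c} u * u) \<bar>y\<bar> / (2 * ennreal (c - a))"
proof -
  note B_sets[measurable_cong]
  have "(\<integral>\<^sup>+b. ennreal (lap_density b y) \<partial>B) = (\<integral>\<^sup>+b. ennreal (lap_density (1 / (1 / b)) y) \<partial>B)"
    by simp
  also have "\<dots> = (\<integral>\<^sup>+u. ennreal (lap_density (1 / u) y) \<partial>distr B borel (\<lambda>b. 1 / b))"
    by (rule nn_integral_distr[symmetric]) measurable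
  also have "\<dots> = (\<integral>\<^sup>+u. ennreal (lap_density (1 / u) y) * indicator {a..c} u \<partial>lborel) / ennreal (c - a)"
    using assms unfolding B_inv_unif by (subst nn_integral_uniform_measure) auto
  also have "(\<integral>\<^sup>+u. ennreal (lap_density (1 / u) y) * indicator {a..c} u \<partial>lborel) =
      (\<integral>\<^sup>+u. ennreal (1 / 2) * ennreal (indicator {a..c} u * u * exp (- (u * \<bar>y\<bar>))) \<partial>lborel)"
  proof (intro nn_integral_cong)
    fix u :: real
    show "ennreal (lap_density (1 / u) y) * indicator {a..c} u =
        ennreal (1 / 2) * ennreal (indicator {a..c} u * u * exp (- (u * \<bar>y\<bar>)))"
    proof (cases "u \<in> {a..c}")
      case True
      then have "0 \<le> u"
        using assms by auto
      \<comment> \<open>also for \<open>u = 0\<close>, where \<open>1 / 0 = 0\<close> and \<open>lap_density 0 y = 0\<close>\<close>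
      then have lap: "lap_density (1 / u) y = 1 / 2 * (u * exp (- (u * \<bar>y\<bar>)))"
        by (cases "u = 0") (auto simp: lap_density_def field_simps)
      have ind: "indicator {a..c} u = (1::real)" "indicator {a..c} u = (1::ennreal)"
        using True by auto
      show ?thesis
        unfolding lap ind mult_1 mult_1_right using \<open>0 \<le> u\<close> by (intro ennreal_mult) auto
    qed simp
  qed
  also have "\<dots> = ennreal (1 / 2) * laplace_transform (\<lambda>u. indicator {a..c} u * u) \<bar>y\<bar>"
    unfolding laplace_transform_def by (rule nn_integral_cmult) auto
  finally show ?thesis
    using assms by (simp add: divide_ennreal_def ennreal_inverse_mult mult_ac)
qed

lemma nn_integral_lap_density_inverse_uniform_le:
  assumes "0 \<le> a" "a < c" "0 < \<Delta>" and B_sets: "sets B = sets borel"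
    and B_inv_unif: "distr B borel (\<lambda>b. 1 / b) = uniform_measure lborel {a..c}"
    and "\<bar>y - y'\<bar> \<le> \<Delta>"
  shows "(\<integral>\<^sup>+b. ennreal (lap_density b y) \<partial>B) \<le>
    ennreal (inverse_uniform_density_ratio (a * \<Delta>) (c * \<Delta>)) * (\<integral>\<^sup>+b. ennreal (lap_density b y') \<partial>B)"
proof -
  let ?w = "\<lambda>u. indicator {a..c} u * u"
  define N where "N = (1 + a * \<Delta>) * exp (- (a * \<Delta>)) - (1 + c * \<Delta>) * exp (- (c * \<Delta>))"
  have "0 < N"
    using one_plus_mult_exp_neg_strict_decreasing[of "a * \<Delta>" "c * \<Delta>"] assms
    by (simp add: N_def mult_strict_right_mono)
  have L\<Delta>: "laplace_transform ?w \<Delta> = ennreal (N / \<Delta>\<^sup>2)"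
    unfolding N_def using assms by (intro laplace_transform_Icc) auto
  have "laplace_transform ?w 0 / laplace_transform ?w \<Delta> = ennreal (((c\<^sup>2 - a\<^sup>2) / 2) / (N / \<Delta>\<^sup>2))"
    using assms \<open>0 < N\<close> by (simp add: laplace_transform_Icc_zero L\<Delta> divide_ennreal power_mono)
  also have "((c\<^sup>2 - a\<^sup>2) / 2) / (N / \<Delta>\<^sup>2) = inverse_uniform_density_ratio (a * \<Delta>) (c * \<Delta>)"
    using assms \<open>0 < N\<close>
    by (simp add: N_def inverse_uniform_density_ratio_def field_simps power_mult_distrib)
  finally have ratio: "laplace_transform ?w 0 / laplace_transform ?w \<Delta> =
      ennreal (inverse_uniform_density_ratio (a * \<Delta>) (c * \<Delta>))" .
  have "laplace_transform ?w \<bar>y\<bar> \<le>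
      ennreal (inverse_uniform_density_ratio (a * \<Delta>) (c * \<Delta>)) * laplace_transform ?w \<bar>y'\<bar>"
    unfolding ratio[symmetric] using assms \<open>0 < N\<close>
    by (intro laplace_transform_le_ratio_mult) (auto simp: L\<Delta> split: split_indicator)
  then show ?thesis
    using assms
    by (simp add: nn_integral_lap_density_inverse_uniform ennreal_times_divide divide_right_mono_ennreal)
qed

theorem theoremB4:
  fixes adj :: "'d \<Rightarrow> 'd \<Rightarrow> bool" and q :: "'d \<Rightarrow> real"
    and a c :: real and B :: "real measure"
  assumes bdd: "bdd_above ((\<lambda>p. \<bar>q (fst p) - q (snd p)\<bar>) ` {(d, d'). adj d d'})"
    and sens_pos: "sensitivity adj q > 0"
    and ac: "0 \<le> a" "a < c"
    and B_prob: "prob_space B" and B_sets: "sets B = sets borel"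
    and B_inv_unif: "distr B borel (\<lambda>b. 1 / b) = uniform_measure lborel {a..c}"
  shows "differentially_private adj (R2DP_laplace B q)
           (let \<alpha> = a * sensitivity adj q; \<beta> = c * sensitivity adj q in
            ln ((\<alpha>\<^sup>2 - \<beta>\<^sup>2) /
                (2 * ((1 + \<beta>) * exp (- \<beta>) - (1 + \<alpha>) * exp (- \<alpha>)))))"
proof -
  define \<Delta> where "\<Delta> = sensitivity adj q"
  define R where "R = inverse_uniform_density_ratio (a * \<Delta>) (c * \<Delta>)"
  define f where "f y = (\<integral>\<^sup>+b. ennreal (lap_density b y) \<partial>B)" for y
  interpret B: prob_space B by (rule B_prob)
  have B_subprob: "subprob_space B"
    by (rule prob_space_imp_subprob_space[OF B_prob])
  have "0 < R"
    unfolding R_def using ac sens_pos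
    by (intro inverse_uniform_density_ratio_pos) (auto simp: \<Delta>_def mult_strict_right_mono)
  have "differentially_private adj (R2DP_laplace B q) (ln R)"
  proof (rule differentially_private_shifted_density)
    show "R2DP_laplace B q d = density lborel (\<lambda>x. f (x - q d))" for d
      unfolding R2DP_laplace_def f_def by (rule bind_laplace_shifted_eq_density[OF B_subprob B_sets])
    show "finite_measure (R2DP_laplace B q d)" for d
      using subprob_space_R2DP_laplace[OF B_subprob B_sets] by (rule subprob_space.axioms(1))
    show "f \<in> borel_measurable borel"
      unfolding f_def using B_sets[measurable_cong] by measurable
    show "adj d d' \<Longrightarrow> \<bar>q d - q d'\<bar> \<le> \<Delta>" for d d'
      unfolding \<Delta>_def using bdd by (rule abs_diff_le_sensitivity)
    show "\<bar>y - y'\<bar> \<le> \<Delta> \<Longrightarrow> f y \<le> ennreal (exp (ln R)) * f y'" for y y'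
      unfolding exp_ln[OF \<open>0 < R\<close>] f_def unfolding R_def
      by (rule nn_integral_lap_density_inverse_uniform_le[OF ac sens_pos[folded \<Delta>_def] B_sets B_inv_unif])
  qed
  then show ?thesis
    by (simp add: R_def \<Delta>_def inverse_uniform_density_ratio_def Let_def)
qed

end
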